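(* Let $K$ be a simplicial complex on $[m]$ and let $K_1,\dots,K_m$ be simplicial complexes on pairwise disjoint finite vertex sets, each having at least one vertex (a 0-simplex). Suppose $K$ has a minimal missing face $\omega$ with $|\omega|\ge3$ and there is a vertex $v\in\omega$ such that $K_v$ contains a 1-simplex. Then for no $k\ge0$ is the substitution complex $K(K_1,\dots,K_m)$ equal to the $k$-skeleton of a flag complex.
   Context: A minimal missing face of $K$ is a subset $\omega$ of the vertex set with $\omega\notin K$ but every proper subset of $\omega$ in $K$. A simplicial complex is flag if every set of its vertices pairwise joined by edges is a simplex. The $k$-skeleton of a complex consists of its simplices of dimension at most $k$. The substitution complex $K(K_1,\dots,K_m)$ is $\bigcup_{\sigma\in K}\ast_{i\in\sigma}K_i$, i.e. its simplices are the sets $\bigcup_{i\in\sigma}\tau_i$ with $\sigma\in K$ and $\tau_i\in K_i$. *)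

theory Defs
  imports Main
begin

text \<open>Ghost vertices (elements of V not forming a 0-simplex) are allowed.\<close>
definition simplicial_complex_on :: "'a set \<Rightarrow> 'a set set \<Rightarrow> bool" where
  "simplicial_complex_on V K \<longleftrightarrow> finite V \<and> {} \<in> K \<and> (\<forall>\<sigma>\<in>K. \<sigma> \<subseteq> V)
     \<and> (\<forall>\<sigma>\<in>K. \<forall>\<tau>. \<tau> \<subseteq> \<sigma> \<longrightarrow> \<tau> \<in> K)"

definition vertices :: "'a set set \<Rightarrow> 'a set" where
  "vertices K = {x. {x} \<in> K}"

definition minimal_missing_face :: "'a set \<Rightarrow> 'a set set \<Rightarrow> 'a set \<Rightarrow> bool" where
  "minimal_missing_face V K \<omega> \<longleftrightarrow> \<omega> \<subseteq> V \<and> \<omega> \<notin> K \<and> (\<forall>\<tau>. \<tau> \<subset> \<omega> \<longrightarrow> \<tau> \<in> K)"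

definition flag :: "'a set set \<Rightarrow> bool" where
  "flag K \<longleftrightarrow> (\<forall>S. finite S \<and> S \<subseteq> vertices K \<and>
      (\<forall>x\<in>S. \<forall>y\<in>S. x \<noteq> y \<longrightarrow> {x, y} \<in> K) \<longrightarrow> S \<in> K)"

definition skeleton :: "nat \<Rightarrow> 'a set set \<Rightarrow> 'a set set" where
  "skeleton k K = {\<sigma> \<in> K. card \<sigma> \<le> k + 1}"

definition substitution :: "'i set set \<Rightarrow> ('i \<Rightarrow> 'a set set) \<Rightarrow> 'a set set" where
  "substitution K Ks = {\<Union>i\<in>\<sigma>. \<tau> i | \<sigma> \<tau>. \<sigma> \<in> K \<and> (\<forall>i\<in>\<sigma>. \<tau> i \<in> Ks i)}"

end

theory Submission
  imports Defs
begin

text \<open>Choose a vertex \<open>x i\<close> of each \<open>K\<^sub>i\<close>, \<open>i \<in> \<omega>\<close>, with \<open>x v\<close> an endpoint of an edge \<open>{x v, b}\<close>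
  of \<open>K\<^sub>v\<close>. Since the vertex sets are disjoint, \<open>x ` \<omega>\<close> is a minimal missing face of the
  substitution complex, just as \<open>\<omega>\<close> is one of \<open>K\<close>. A flag complex has no minimal missing faces
  with three or more vertices, so in a \<open>k\<close>-skeleton of one every such minimal missing face has
  exactly \<open>k + 2\<close> vertices; hence \<open>|\<omega>| = k + 2\<close>. But replacing \<open>x j\<close> (\<open>j \<noteq> v\<close>) by \<open>b\<close> in
  \<open>x ` \<omega>\<close> gives a simplex of the substitution complex with \<open>|\<omega>|\<close> vertices, i.e. of dimension
  \<open>k + 1\<close>.\<close>

lemma simplicial_complex_on_face_subset:
  "simplicial_complex_on V K \<Longrightarrow> \<sigma> \<in> K \<Longrightarrow> \<sigma> \<subseteq> V"
  unfolding simplicial_complex_on_def by blast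

lemma simplicial_complex_on_subface:
  "simplicial_complex_on V K \<Longrightarrow> \<sigma> \<in> K \<Longrightarrow> \<tau> \<subseteq> \<sigma> \<Longrightarrow> \<tau> \<in> K"
  unfolding simplicial_complex_on_def by blast

lemma flag_mem_if_proper_subsets_mem:
  assumes "flag L" "finite T" "card T \<ge> 3" "\<And>\<tau>. \<tau> \<subset> T \<Longrightarrow> \<tau> \<in> L"
  shows "T \<in> L"
proof -
  have proper: "\<tau> \<subset> T" if "\<tau> \<subseteq> T" "card \<tau> \<le> 2" for \<tau>
    using that assms(3) by auto
  have "T \<subseteq> vertices L"
    using proper assms(4) by (auto simp: vertices_def)
  moreover have "{y, z} \<in> L" if "y \<in> T" "z \<in> T" for y z
    using that proper[of "{y, z}"] assms(4) by (simp add: card_insert_le_m1)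
  ultimately show ?thesis
    using assms(1,2) unfolding flag_def by blast
qed

lemma card_minimal_missing_face_skeleton_flag:
  assumes "flag L" "minimal_missing_face W (skeleton k L) T" "finite T" "card T \<ge> 3"
  shows "card T = k + 2"
proof -
  have T: "T \<notin> skeleton k L" "\<And>\<tau>. \<tau> \<subset> T \<Longrightarrow> \<tau> \<in> skeleton k L"
    using assms(2) unfolding minimal_missing_face_def by blast+
  have "T \<in> L"
    using flag_mem_if_proper_subsets_mem[OF assms(1,3,4)] T(2) by (simp add: skeleton_def)
  then have "card T > k + 1"
    using T(1) by (simp add: skeleton_def)
  moreover have "T \<noteq> {}"
    using assms(4) by auto
  then obtain y where "y \<in> T"
    by blast
  then have "card (T - {y}) \<le> k + 1"
    using T(2)[of "T - {y}"] unfolding skeleton_def by blast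
  moreover have "card (T - {y}) = card T - 1"
    using \<open>y \<in> T\<close> by (rule card_Diff_singleton)
  ultimately show ?thesis
    by linarith
qed

lemma substitution_memI:
  assumes "\<sigma> \<in> K" "\<And>i. i \<in> \<sigma> \<Longrightarrow> \<tau> i \<in> Ks i"
  shows "(\<Union>i\<in>\<sigma>. \<tau> i) \<in> substitution K Ks"
  using assms unfolding substitution_def by blast

lemma obtain_vertex_choice:
  assumes "\<forall>i\<in>A. \<exists>y. {y} \<in> Ks i" "{a} \<in> Ks v"
  obtains x where "\<And>i. i \<in> A \<Longrightarrow> {x i} \<in> Ks i" "x v = a"
proof -
  obtain x0 where "\<forall>i\<in>A. {x0 i} \<in> Ks i"
    using assms(1) by (auto dest!: bchoice)
  then show ?thesis
    using that[of "x0(v := a)"] assms(2) by simp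
qed

locale substitution_data =
  fixes I :: "'i set" and K :: "'i set set" and Vs :: "'i \<Rightarrow> 'a set" and Ks :: "'i \<Rightarrow> 'a set set"
  assumes complex: "simplicial_complex_on I K"
    and complexes: "\<And>i. i \<in> I \<Longrightarrow> simplicial_complex_on (Vs i) (Ks i)"
    and disjoint: "\<And>i j. i \<in> I \<Longrightarrow> j \<in> I \<Longrightarrow> i \<noteq> j \<Longrightarrow> Vs i \<inter> Vs j = {}"
begin

lemma eq_if_common_vertex:
  assumes "i \<in> I" "j \<in> I" "y \<in> Vs i" "y \<in> Vs j"
  shows "i = j"
  using disjoint[OF assms(1,2)] assms(3,4) by blast

lemma vertex_mem:
  assumes "i \<in> I" "{y} \<in> Ks i"
  shows "y \<in> Vs i"
  using simplicial_complex_on_face_subset[OF complexes[OF assms(1)] assms(2)] by blast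

lemma substitution_support_mem:
  assumes "T \<in> substitution K Ks"
  shows "{i \<in> I. T \<inter> Vs i \<noteq> {}} \<in> K"
proof -
  obtain \<sigma> \<tau> where T: "T = (\<Union>i\<in>\<sigma>. \<tau> i)" and "\<sigma> \<in> K" and \<tau>: "\<forall>i\<in>\<sigma>. \<tau> i \<in> Ks i"
    using assms unfolding substitution_def by blast
  have "\<sigma> \<subseteq> I"
    using simplicial_complex_on_face_subset[OF complex \<open>\<sigma> \<in> K\<close>] .
  have "i \<in> \<sigma>" if "i \<in> I" "y \<in> T" "y \<in> Vs i" for i y
  proof -
    obtain j where "j \<in> \<sigma>" "y \<in> \<tau> j"
      using T \<open>y \<in> T\<close> by blast
    then have "j \<in> I"
      using \<open>\<sigma> \<subseteq> I\<close> by blast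
    have "\<tau> j \<subseteq> Vs j"
      using simplicial_complex_on_face_subset[OF complexes[OF \<open>j \<in> I\<close>]] \<tau> \<open>j \<in> \<sigma>\<close> by blast
    then have "i = j"
      using eq_if_common_vertex[OF \<open>i \<in> I\<close> \<open>j \<in> I\<close> \<open>y \<in> Vs i\<close>] \<open>y \<in> \<tau> j\<close> by blast
    then show ?thesis
      using \<open>j \<in> \<sigma>\<close> by simp
  qed
  then have "{i \<in> I. T \<inter> Vs i \<noteq> {}} \<subseteq> \<sigma>"
    by blast
  then show ?thesis
    using simplicial_complex_on_subface[OF complex \<open>\<sigma> \<in> K\<close>] by blast
qed

context
  fixes A :: "'i set" and x :: "'i \<Rightarrow> 'a"
  assumes subset: "A \<subseteq> I" and choice: "\<And>i. i \<in> A \<Longrightarrow> {x i} \<in> Ks i"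
begin

lemma choice_mem: "i \<in> A \<Longrightarrow> x i \<in> Vs i"
  using vertex_mem choice subset by blast

lemma inj_on_choice: "inj_on x A"
  by (rule inj_onI) (metis choice_mem eq_if_common_vertex subset subsetD)

lemma image_choice_mem_substitution_iff:
  assumes "B \<subseteq> A"
  shows "x ` B \<in> substitution K Ks \<longleftrightarrow> B \<in> K"
proof
  assume "x ` B \<in> substitution K Ks"
  then have "{i \<in> I. x ` B \<inter> Vs i \<noteq> {}} \<in> K"
    by (rule substitution_support_mem)
  moreover have "B \<subseteq> {i \<in> I. x ` B \<inter> Vs i \<noteq> {}}"
    using choice_mem assms subset by blast
  ultimately show "B \<in> K"
    using simplicial_complex_on_subface[OF complex] by blast
next
  assume "B \<in> K"
  then have "(\<Union>i\<in>B. {x i}) \<in> substitution K Ks"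
    using choice assms by (intro substitution_memI) auto
  then show "x ` B \<in> substitution K Ks"
    by (simp add: UNION_singleton_eq_range)
qed

end

lemma minimal_missing_face_image_choice:
  assumes "minimal_missing_face I K \<omega>" "\<And>i. i \<in> \<omega> \<Longrightarrow> {x i} \<in> Ks i"
  shows "minimal_missing_face (\<Union>i\<in>I. Vs i) (substitution K Ks) (x ` \<omega>)"
proof -
  have \<omega>: "\<omega> \<subseteq> I" "\<omega> \<notin> K" "\<And>\<tau>. \<tau> \<subset> \<omega> \<Longrightarrow> \<tau> \<in> K"
    using assms(1) unfolding minimal_missing_face_def by auto
  note mem_iff = image_choice_mem_substitution_iff[OF \<omega>(1) assms(2)]
  have "\<tau> \<in> substitution K Ks" if "\<tau> \<subset> x ` \<omega>" for \<tau>
  proof -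
    have "\<omega> \<inter> x -` \<tau> \<subset> \<omega>" "x ` (\<omega> \<inter> x -` \<tau>) = \<tau>"
      using that by blast+
    then show ?thesis
      using mem_iff[of "\<omega> \<inter> x -` \<tau>"] \<omega>(3) by auto
  qed
  moreover have "x ` \<omega> \<subseteq> (\<Union>i\<in>I. Vs i)"
    using choice_mem[OF \<omega>(1) assms(2)] \<omega>(1) by blast
  ultimately show ?thesis
    using mem_iff[of \<omega>] \<omega>(2) unfolding minimal_missing_face_def by blast
qed

lemma exchange_vertex_mem_substitution:
  assumes "minimal_missing_face I K \<omega>" "\<And>i. i \<in> \<omega> \<Longrightarrow> {x i} \<in> Ks i"
    and "j \<in> \<omega>" "v \<in> \<omega>" "v \<noteq> j" "{x v, b} \<in> Ks v" "b \<noteq> x v"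
  shows "insert b (x ` (\<omega> - {j})) \<in> substitution K Ks"
    and "card (insert b (x ` (\<omega> - {j}))) = card \<omega>"
proof -
  have \<omega>: "\<omega> \<subseteq> I" "\<omega> - {j} \<in> K"
    using assms(1,3) unfolding minimal_missing_face_def by auto
  define \<tau> where "\<tau> = (\<lambda>i. {x i})(v := {x v, b})"
  have "(\<Union>i\<in>\<omega> - {j}. \<tau> i) = insert b (x ` (\<omega> - {j}))"
    using assms(4,5) by (auto simp: \<tau>_def)
  moreover have "(\<Union>i\<in>\<omega> - {j}. \<tau> i) \<in> substitution K Ks"
    using \<omega>(2) assms(2,6) by (intro substitution_memI) (auto simp: \<tau>_def)
  ultimately show "insert b (x ` (\<omega> - {j})) \<in> substitution K Ks"
    by simp
  have "finite \<omega>"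
    using \<omega>(1) complex finite_subset unfolding simplicial_complex_on_def by blast
  have "x i \<noteq> b" if "i \<in> \<omega>" for i
  proof (cases "i = v")
    case False
    have "b \<in> Vs v"
      using simplicial_complex_on_face_subset[OF complexes assms(6)] \<omega>(1) assms(4) by blast
    then show ?thesis
      using eq_if_common_vertex choice_mem[OF \<omega>(1) assms(2)] \<omega>(1) that assms(4) False by blast
  qed (use assms(7) in simp)
  then have "b \<notin> x ` (\<omega> - {j})"
    by blast
  then have "card (insert b (x ` (\<omega> - {j}))) = Suc (card (\<omega> - {j}))"
    using \<open>finite \<omega>\<close> card_image[OF inj_on_subset[OF inj_on_choice[OF \<omega>(1) assms(2)], of "\<omega> - {j}"]]
    by simp
  also have "\<dots> = card \<omega>"
    using \<open>finite \<omega>\<close> \<open>j \<in> \<omega>\<close> by (rule card_Suc_Diff1)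
  finally show "card (insert b (x ` (\<omega> - {j}))) = card \<omega>" .
qed

end

theorem lemma7p5:
  fixes m :: nat and K :: "nat set set"
    and Vs :: "nat \<Rightarrow> 'a set" and Ks :: "nat \<Rightarrow> 'a set set"
    and \<omega> :: "nat set" and v :: nat
  assumes "simplicial_complex_on {1..m} K"
    and "\<forall>i\<in>{1..m}. simplicial_complex_on (Vs i) (Ks i)"
    and "\<forall>i\<in>{1..m}. \<forall>j\<in>{1..m}. i \<noteq> j \<longrightarrow> Vs i \<inter> Vs j = {}"
    and "\<forall>i\<in>{1..m}. \<exists>x. {x} \<in> Ks i"
    and "minimal_missing_face {1..m} K \<omega>"
    and "card \<omega> \<ge> 3"
    and "v \<in> \<omega>"
    and "\<exists>e\<in>Ks v. card e = 2"
  shows "\<not> (\<exists>k L W. simplicial_complex_on W L \<and> flag L \<and>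
              substitution K Ks = skeleton k L)"
proof
  assume "\<exists>k L W. simplicial_complex_on W L \<and> flag L \<and> substitution K Ks = skeleton k L"
  then obtain k L where "flag L" and M: "substitution K Ks = skeleton k L"
    by blast
  interpret substitution_data "{1..m}" K Vs Ks
    using assms(1-3) by unfold_locales auto
  have \<omega>: "\<omega> \<subseteq> {1..m}" "finite \<omega>"
    using assms(5) finite_subset unfolding minimal_missing_face_def by auto
  obtain a b where ab: "{a, b} \<in> Ks v" "a \<noteq> b"
    using assms(8) by (auto simp: card_2_iff)
  have "{a} \<in> Ks v"
    using simplicial_complex_on_subface[OF complexes ab(1)] \<omega>(1) assms(7) by blast
  then obtain x where x: "\<And>i. i \<in> \<omega> \<Longrightarrow> {x i} \<in> Ks i" and "x v = a"
    using obtain_vertex_choice[of \<omega> Ks a v] assms(4) \<omega>(1) by blast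
  have "card \<omega> = k + 2"
    using card_minimal_missing_face_skeleton_flag[OF \<open>flag L\<close>, where T = "x ` \<omega>"]
      minimal_missing_face_image_choice[OF assms(5) x] M \<omega>(2) assms(6)
      card_image[OF inj_on_choice[OF \<omega>(1) x]] by simp
  have "\<omega> \<noteq> {v}"
    using assms(6) by auto
  then obtain j where "j \<in> \<omega>" "j \<noteq> v"
    using assms(7) by blast
  moreover have "{x v, b} \<in> Ks v" "b \<noteq> x v"
    using ab \<open>x v = a\<close> by auto
  ultimately have "insert b (x ` (\<omega> - {j})) \<in> skeleton k L"
    and "card (insert b (x ` (\<omega> - {j}))) = card \<omega>"
    using exchange_vertex_mem_substitution[OF assms(5) x _ assms(7)] M by auto
  then show False
    using \<open>card \<omega> = k + 2\<close> by (simp add: skeleton_def)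
qed

end
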